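(* Let $\tau_0,\tau_1,\tau_2>0$, let $0<\alpha\le 1$, and let $a\in\mathcal{B}_\alpha$. Let $A=\mathrm{CC}(a)$ and $B=e_n$. Then $$\sum_{k=0}^{\infty}\|\alpha^{-k}A^kB\|^2\le 2\pi n\,\alpha^{-2n}/\tau_1^2,$$ and for every $k\ge0$, $$\|A^kB\|^2\le\min\left\{2\pi n/\tau_1^2,\ 2\pi n\,\alpha^{2k-2n}/\tau_1^2\right\}.$$
   Context: $\mathcal{C}=\{z\in\mathbb{C}:\Re z\ge(1+\tau_0)|\Im z|\}\cap\{z\in\mathbb{C}:\tau_1<\Re z<\tau_2\}$; for $a=(a_1,\dots,a_n)\in\mathbb{R}^n$, $p_a(z)=z^n+a_1z^{n-1}+\dots+a_n$; $\mathcal{B}_\alpha=\{a\in\mathbb{R}^n:\ p_a(z)/z^n\in\mathcal{C}\text{ for all } |z|=\alpha\}$. $\mathrm{CC}(a)$ is the $n\times n$ companion matrix with ones on the superdiagonal, zeros elsewhere in the first $n-1$ rows, and last row $[-a_n,\dots,-a_1]$; $e_n$ is the $n$-th standard basis vector; $\|\cdot\|$ is the Euclidean norm. *)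

theory Defs
  imports Complex_Main "Jordan_Normal_Form.Matrix"
begin

definition regionC :: "real \<Rightarrow> real \<Rightarrow> real \<Rightarrow> complex set" where
  "regionC \<tau>0 \<tau>1 \<tau>2 = {z. Re z \<ge> (1 + \<tau>0) * \<bar>Im z\<bar>} \<inter> {z. \<tau>1 < Re z \<and> Re z < \<tau>2}"

text \<open>a = (a_1,...,a_n) is stored as a vector of dimension n with a_k = a $ (k-1).
  p_a(z) = z^n + a_1 z^(n-1) + ... + a_n.\<close>
definition char_poly_a :: "real vec \<Rightarrow> complex \<Rightarrow> complex" where
  "char_poly_a a z = z ^ dim_vec a + (\<Sum>k\<in>{1..dim_vec a}. complex_of_real (a $ (k - 1)) * z ^ (dim_vec a - k))"

definition B_alpha :: "real \<Rightarrow> real \<Rightarrow> real \<Rightarrow> nat \<Rightarrow> real \<Rightarrow> real vec set" where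
  "B_alpha \<tau>0 \<tau>1 \<tau>2 n \<alpha> = {a. dim_vec a = n \<and>
     (\<forall>z. cmod z = \<alpha> \<longrightarrow> char_poly_a a z / z ^ n \<in> regionC \<tau>0 \<tau>1 \<tau>2)}"

text \<open>Companion matrix: ones on the superdiagonal in the first n-1 rows,
  last row [-a_n, ..., -a_1] (0-based column j carries -a_(n-j)).\<close>
definition CC :: "real vec \<Rightarrow> real mat" where
  "CC a = (let n = dim_vec a in mat n n (\<lambda>(i, j).
      if i < n - 1 then (if j = i + 1 then 1 else 0) else - (a $ (n - 1 - j))))"

definition sqnorm :: "real vec \<Rightarrow> real" where
  "sqnorm v = (\<Sum>i<dim_vec v. (v $ i)\<^sup>2)"

end

theory Submission
  imports Defs "HOL-Complex_Analysis.Complex_Analysis"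
begin

text \<open>Let s(m) be the first entry of A^m e_n. Then A^k e_n = (s(k), ..., s(k+n-1)), and s
  obeys the linear recurrence of p_a with initial values e_n, so its generating function is
  S(w) = w^(n-1) / P(w) for the reversed polynomial P(w) = w^n p_a(1/w). The hypothesis on a says
  Re P > \<tau>1 on the circle |w| = R = 1/\<alpha>; by the maximum principle for Re(-P) this persists on
  the closed disc, so S converges beyond R and |S| \<le> R^(n-1)/\<tau>1 on the circle. Parseval's
  identity, in its discrete form at the N-th roots of unity plus a tail estimate, gives
  \<Sum> s(m)^2 R^(2m) \<le> R^(2n-2)/\<tau>1^2, and both bounds follow by comparing each |A^k e_n|^2
  with a window of n consecutive terms of this series.\<close>

hide_type (open) Finite_Cartesian_Product.vec
hide_const (open) Finite_Cartesian_Product.vec Finite_Cartesian_Product.mat Finite_Cartesian_Product.row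
  Finite_Cartesian_Product.column
no_notation Finite_Cartesian_Product.vec_nth (infixl "$" 90)
no_notation Formal_Power_Series.fps_nth (infixl "$" 75)

section \<open>Discrete Parseval identity\<close>

lemma cis_two_pi_frac_eq_1_iff:
  fixes m l N :: nat
  assumes "m < N" "l < N"
  shows "cis (2 * pi * (real m - real l) / real N) = 1 \<longleftrightarrow> m = l"
proof
  assume "cis (2 * pi * (real m - real l) / real N) = 1"
  then obtain k :: int where k: "2 * pi * (real m - real l) / real N = of_int (2 * k) * pi"
    by (auto simp: cis_conv_exp exp_eq_1)
  then have "2 * pi * (real m - real l) = 2 * pi * (real N * of_int k)"
    using assms by (simp add: field_simps)
  then have "real m - real l = real N * of_int k"
    by simp
  then have mlk: "int m - int l = int N * k"
    by (metis of_int_eq_iff of_int_mult of_int_of_nat_eq of_int_diff)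
  have "\<bar>int N * k\<bar> < int N"
    unfolding mlk[symmetric] using assms by auto
  then have "k = 0"
  proof (rule contrapos_pp)
    assume "k \<noteq> 0"
    then have "1 \<le> \<bar>k\<bar>" by linarith
    then have "int N \<le> int N * \<bar>k\<bar>"
      using mult_left_mono[of 1 "\<bar>k\<bar>" "int N"] by simp
    then show "\<not> \<bar>int N * k\<bar> < int N" by (simp add: abs_mult)
  qed
  then show "m = l" using mlk by simp
qed simp

lemma sum_roots_of_unity_orthogonal:
  fixes m l N :: nat
  assumes "m < N" "l < N"
  shows "(\<Sum>j<N. cis (2*pi*real j*real m/real N) * cnj (cis (2*pi*real j*real l/real N)))
         = (if m = l then of_nat N else 0)"
proof -
  define z where "z = cis (2 * pi * (real m - real l) / real N)"
  have "cis (2*pi*real j*real m/real N) * cnj (cis (2*pi*real j*real l/real N)) = z ^ j" for j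
    unfolding z_def Complex.DeMoivre cis_cnj cis_mult by (rule arg_cong[where f = cis])
       (simp add: diff_divide_distrib right_diff_distrib mult.assoc mult.left_commute)
  then have sum_eq: "(\<Sum>j<N. cis (2*pi*real j*real m/real N) * cnj (cis (2*pi*real j*real l/real N)))
      = (\<Sum>j<N. z ^ j)" by simp
  have "z ^ N = cis (2 * pi * (real m - real l))"
    using assms by (simp add: z_def Complex.DeMoivre)
  also have "\<dots> = 1"
    by (metis Ints_diff Ints_of_nat cis_multiple_2pi)
  finally have "z ^ N = 1" .
  then show ?thesis
    unfolding sum_eq using cis_two_pi_frac_eq_1_iff[OF assms] by (auto simp: z_def sum_gp_strict)
qed

lemma discrete_parseval:
  fixes b :: "nat \<Rightarrow> complex" and N :: nat
  shows "(\<Sum>j<N. (cmod (\<Sum>m<N. b m * cis (2*pi*real j*real m/real N)))\<^sup>2)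
         = real N * (\<Sum>m<N. (cmod (b m))\<^sup>2)"
proof -
  define w where "w j m = cis (2*pi*real j*real m/real N)" for j m
  have "complex_of_real (\<Sum>j<N. (cmod (\<Sum>m<N. b m * w j m))\<^sup>2)
      = (\<Sum>j<N. (\<Sum>m<N. b m * w j m) * cnj (\<Sum>l<N. b l * w j l))"
    by (simp only: of_real_sum complex_norm_square)
  also have "\<dots> = (\<Sum>j<N. \<Sum>m<N. \<Sum>l<N. b m * cnj (b l) * (w j m * cnj (w j l)))"
    by (intro sum.cong refl, simp only: cnj_sum complex_cnj_mult sum_product, intro sum.cong refl)
       (simp add: mult.commute mult.left_commute)
  also have "\<dots> = (\<Sum>m<N. \<Sum>l<N. \<Sum>j<N. b m * cnj (b l) * (w j m * cnj (w j l)))"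
    by (subst sum.swap, rule sum.cong[OF refl], rule sum.swap)
  also have "\<dots> = (\<Sum>m<N. \<Sum>l<N. b m * cnj (b l) * (if m = l then of_nat N else 0))"
    by (simp only: sum_distrib_left[symmetric]) (simp add: w_def sum_roots_of_unity_orthogonal)
  also have "\<dots> = (\<Sum>m<N. b m * cnj (b m) * of_nat N)"
    by (simp add: if_distrib sum.delta cong: if_cong)
  also have "\<dots> = complex_of_real (real N * (\<Sum>m<N. (cmod (b m))\<^sup>2))"
    by (simp only: of_real_mult of_real_sum sum_distrib_left complex_norm_square of_real_of_nat_eq mult_ac)
  finally show ?thesis
    unfolding w_def of_real_eq_iff .
qed

section \<open>A Parseval inequality for power series on a circle\<close>

lemma sum_sq_coeff_le_sup_on_circle:
  fixes c :: "nat \<Rightarrow> complex" and R M :: real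
  assumes "N > 0" and "R \<ge> 0"
    and bound: "\<And>w. cmod w = R \<Longrightarrow> cmod (\<Sum>m<N. c m * w ^ m) \<le> M"
  shows "(\<Sum>m<N. (cmod (c m) * R ^ m)\<^sup>2) \<le> M\<^sup>2"
proof -
  define z where "z j = complex_of_real R * cis (2 * pi * real j / real N)" for j
  have z_pow: "z j ^ m = complex_of_real (R ^ m) * cis (2*pi*real j*real m/real N)" for j m
    by (simp add: z_def power_mult_distrib Complex.DeMoivre mult_ac)
  have "real N * (\<Sum>m<N. (cmod (c m * complex_of_real (R ^ m)))\<^sup>2)
      = (\<Sum>j<N. (cmod (\<Sum>m<N. c m * z j ^ m))\<^sup>2)"
    using discrete_parseval[of "\<lambda>m. c m * complex_of_real (R ^ m)" N] by (simp add: z_pow mult_ac)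
  also have "\<dots> \<le> (\<Sum>j<N. M\<^sup>2)"
    using \<open>R \<ge> 0\<close> by (intro sum_mono power_mono bound) (auto simp: z_def norm_mult)
  finally show ?thesis
    using assms(1,2) by (simp add: norm_mult norm_power)
qed

text \<open>The partial sums of the series differ from its value by at most the tail of the
  absolutely convergent series, which tends to zero.\<close>
lemma suminf_sq_coeff_le_sup_on_circle:
  fixes c :: "nat \<Rightarrow> complex" and R K :: real
  assumes "R \<ge> 0" and abs_summable: "summable (\<lambda>m. cmod (c m) * R ^ m)"
    and bound: "\<And>w. cmod w = R \<Longrightarrow> cmod (\<Sum>m. c m * w ^ m) \<le> K"
  shows "summable (\<lambda>m. (cmod (c m) * R ^ m)\<^sup>2)"
    and "(\<Sum>m. (cmod (c m) * R ^ m)\<^sup>2) \<le> K\<^sup>2"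
proof -
  define T where "T N = (\<Sum>k. cmod (c (k + N)) * R ^ (k + N))" for N
  have tail_summable: "summable (\<lambda>k. cmod (c (k + N)) * R ^ (k + N))" for N
    using summable_ignore_initial_segment[OF abs_summable, of N] by simp
  have T_nonneg: "0 \<le> T N" for N
    unfolding T_def using \<open>R \<ge> 0\<close> by (intro suminf_nonneg tail_summable) auto
  have T_le: "T N \<le> T 0" for N
    using suminf_split_initial_segment[OF abs_summable, of N] \<open>R \<ge> 0\<close>
    by (simp add: T_def sum_nonneg)
  have "cmod (\<Sum>m. c m * complex_of_real R ^ m) \<le> K"
    using \<open>R \<ge> 0\<close> by (intro bound) simp
  then have K_nonneg: "0 \<le> K"
    by (rule order_trans[OF norm_ge_zero])
  have partial: "(\<Sum>m<N. (cmod (c m) * R ^ m)\<^sup>2) \<le> (K + T N)\<^sup>2" if "N > 0" for N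
  proof (rule sum_sq_coeff_le_sup_on_circle[OF that \<open>R \<ge> 0\<close>])
    fix w :: complex
    assume w: "cmod w = R"
    have norm_term: "cmod (c m * w ^ m) = cmod (c m) * R ^ m" for m
      by (simp add: norm_mult norm_power w)
    have "summable (\<lambda>m. c m * w ^ m)"
      by (rule summable_norm_cancel) (simp add: norm_term abs_summable)
    then have "(\<Sum>m<N. c m * w ^ m) = (\<Sum>m. c m * w ^ m) - (\<Sum>k. c (k + N) * w ^ (k + N))"
      by (simp add: suminf_split_initial_segment[of _ N])
    also have "cmod \<dots> \<le> K + T N"
    proof (rule order_trans[OF norm_triangle_ineq4 add_mono[OF bound[OF w]]])
      show "cmod (\<Sum>k. c (k + N) * w ^ (k + N)) \<le> T N"
        unfolding T_def norm_term[symmetric] using tail_summable[of N]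
        by (intro summable_norm) (simp add: norm_term)
    qed
    finally show "cmod (\<Sum>m<N. c m * w ^ m) \<le> K + T N" .
  qed
  show summable: "summable (\<lambda>m. (cmod (c m) * R ^ m)\<^sup>2)"
  proof (rule summableI_nonneg_bounded)
    fix N
    show "(\<Sum>m<N. (cmod (c m) * R ^ m)\<^sup>2) \<le> (K + T 0)\<^sup>2"
    proof (cases "N = 0")
      case False
      then have "(\<Sum>m<N. (cmod (c m) * R ^ m)\<^sup>2) \<le> (K + T N)\<^sup>2"
        by (intro partial) simp
      also have "\<dots> \<le> (K + T 0)\<^sup>2"
        using T_le T_nonneg K_nonneg by (intro power_mono add_left_mono) auto
      finally show ?thesis .
    qed simp
  qed simp
  have "T \<longlonglongrightarrow> 0"
    unfolding T_def using suminf_exist_split2[OF abs_summable] by simp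
  then have "(\<lambda>N. (K + T N)\<^sup>2) \<longlonglongrightarrow> (K + 0)\<^sup>2"
    by (intro tendsto_intros)
  then show "(\<Sum>m. (cmod (c m) * R ^ m)\<^sup>2) \<le> K\<^sup>2"
    using summable_LIMSEQ[OF summable] partial
    by (intro LIMSEQ_le) (auto intro: exI[of _ 1])
qed

section \<open>Rational generating functions\<close>

lemma Re_ge_on_cball_if_Re_ge_on_sphere:
  fixes f :: "complex \<Rightarrow> complex"
  assumes "f holomorphic_on ball z R" and "continuous_on (cball z R) f"
    and "\<And>w. w \<in> sphere z R \<Longrightarrow> \<tau> \<le> Re (f w)" and "\<xi> \<in> cball z R"
  shows "\<tau> \<le> Re (f \<xi>)"
proof -
  have "Re (- f \<xi>) \<le> - \<tau>"
  proof (rule maximum_real_frontier[of "\<lambda>w. - f w" "cball z R"])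
    show "(\<lambda>w. - f w) holomorphic_on interior (cball z R)"
      using assms(1) by (simp add: holomorphic_on_minus)
    show "continuous_on (closure (cball z R)) (\<lambda>w. - f w)"
      using assms(2) by (simp add: continuous_on_minus)
    show "Re (- f w) \<le> - \<tau>" if "w \<in> frontier (cball z R)" for w
      using that assms(3) by simp
  qed (use assms(4) in simp_all)
  then show ?thesis by simp
qed

lemma poly_nonzero_on_larger_ball:
  fixes P :: "complex poly" and R :: real
  assumes "R \<ge> 0" and nonzero: "\<And>w. cmod w \<le> R \<Longrightarrow> poly P w \<noteq> 0"
  obtains R' where "R < R'" and "\<And>w. cmod w < R' \<Longrightarrow> poly P w \<noteq> 0"
proof -
  have "P \<noteq> 0"
    using nonzero[of 0] \<open>R \<ge> 0\<close> by auto
  define Z where "Z = {w. poly P w = 0}"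
  have "finite Z"
    unfolding Z_def using poly_roots_finite[OF \<open>P \<noteq> 0\<close>] .
  define R' where "R' = Min (insert (R + 1) (cmod ` Z))"
  have "R < R'"
    unfolding R'_def using \<open>finite Z\<close>
  proof (subst Min_gr_iff)
    show "\<forall>r\<in>insert (R + 1) (cmod ` Z). R < r"
      using nonzero by (auto simp: Z_def not_le[symmetric])
  qed auto
  moreover have "poly P w \<noteq> 0" if "cmod w < R'" for w
  proof
    assume "poly P w = 0"
    then have "R' \<le> cmod w"
      unfolding R'_def using \<open>finite Z\<close> by (intro Min_le) (auto simp: Z_def)
    then show False using that by simp
  qed
  ultimately show ?thesis using that by blast
qed

lemma eval_fps_of_poly_mult_eq_X_power:
  fixes P :: "complex poly" and S :: "complex fps" and R :: real
  assumes prod: "fps_of_poly P * S = fps_X ^ d" and "R \<ge> 0"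
    and nonzero: "\<And>w. cmod w \<le> R \<Longrightarrow> poly P w \<noteq> 0"
  shows "ereal R < fps_conv_radius S"
    and "\<And>w. cmod w \<le> R \<Longrightarrow> eval_fps S w = w ^ d / poly P w"
proof -
  obtain R' where "R < R'" and nonzero': "\<And>w. cmod w < R' \<Longrightarrow> poly P w \<noteq> 0"
    using poly_nonzero_on_larger_ball[OF \<open>R \<ge> 0\<close> nonzero] by blast
  have unit: "fps_nth (fps_of_poly P) 0 \<noteq> 0"
    using nonzero[of 0] \<open>R \<ge> 0\<close> by (simp add: poly_0_coeff_0)
  have "S = inverse (fps_of_poly P) * (fps_of_poly P * S)"
    by (simp add: mult.assoc[symmetric] inverse_mult_eq_1[OF unit])
  also have "\<dots> = fps_X ^ d * inverse (fps_of_poly P)"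
    by (simp only: prod) (rule mult.commute)
  also have "\<dots> = fps_X ^ d / fps_of_poly P"
    by (rule fps_divide_unit[OF unit, symmetric])
  finally have S_eq: "S = fps_X ^ d / fps_of_poly P" .
  have R'_pos: "ereal R' > 0"
    using \<open>R < R'\<close> \<open>R \<ge> 0\<close> by simp
  have nonzero_eball: "eval_fps (fps_of_poly P) w \<noteq> 0" if "w \<in> eball 0 (ereal R')" for w
    using that nonzero'[of w] by (simp add: dist_norm)
  have radii: "fps_conv_radius (fps_X ^ d :: complex fps) = \<infinity>" "fps_conv_radius (fps_of_poly P) = \<infinity>"
    by simp_all
  note divide =
    fps_conv_radius_divide'[OF _ _ R'_pos nonzero_eball, of "fps_X ^ d", unfolded radii S_eq[symmetric]]
    eval_fps_divide'[OF _ _ R'_pos nonzero_eball, of "fps_X ^ d", unfolded radii S_eq[symmetric]]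
  have Min_eq: "Min {ereal R', \<infinity>, \<infinity>} = ereal R'"
    by simp
  have "ereal R' \<le> fps_conv_radius S"
    using divide(1) unfolding Min_eq by simp
  then show "ereal R < fps_conv_radius S"
    by (rule less_le_trans[rotated]) (use \<open>R < R'\<close> in simp)
  show "eval_fps S w = w ^ d / poly P w" if "cmod w \<le> R" for w
    using divide(2)[of w] that \<open>R < R'\<close> unfolding Min_eq by simp
qed

lemma linear_recurrence_fps:
  fixes c s :: "nat \<Rightarrow> real" and n :: nat
  assumes "n \<ge> 1"
    and init: "\<And>j. j < n \<Longrightarrow> s j = (if j = n - 1 then 1 else 0)"
    and recurrence: "\<And>k. s (k + n) = - (\<Sum>i=1..n. c i * s (k + n - i))"
  shows "fps_of_poly (1 + (\<Sum>i=1..n. monom (complex_of_real (c i)) i))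
           * Abs_fps (\<lambda>m. complex_of_real (s m)) = fps_X ^ (n - 1)"
    (is "fps_of_poly ?P * ?S = _")
proof (rule fps_ext)
  fix m
  have "fps_of_poly ?P * ?S = ?S + (\<Sum>i=1..n. fps_const (complex_of_real (c i)) * (fps_X ^ i * ?S))"
    by (simp add: fps_of_poly_add fps_of_poly_sum fps_of_poly_monom distrib_right sum_distrib_right
        mult.assoc)
  then have coeff_eq: "fps_nth (fps_of_poly ?P * ?S) m
      = complex_of_real (s m + (\<Sum>i=1..n. c i * (if m < i then 0 else s (m - i))))"
    by (simp add: fps_sum_nth fps_X_power_mult_nth of_real_sum if_distrib cong: if_cong)
  have "s m + (\<Sum>i=1..n. c i * (if m < i then 0 else s (m - i))) = (if m = n - 1 then 1 else 0)"
  proof (cases "m < n")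
    case True
    then have "(\<Sum>i=1..n. c i * (if m < i then 0 else s (m - i))) = 0"
      using init by (intro sum.neutral) auto
    then show ?thesis using True init by simp
  next
    case False
    then obtain k where k: "m = k + n"
      by (metis add.commute le_Suc_ex not_less)
    have "(\<Sum>i=1..n. c i * (if m < i then 0 else s (m - i))) = (\<Sum>i=1..n. c i * s (k + n - i))"
      using k by (intro sum.cong) auto
    then show ?thesis
      using k recurrence[of k] \<open>n \<ge> 1\<close> by simp
  qed
  then show "fps_nth (fps_of_poly ?P * ?S) m = fps_nth (fps_X ^ (n - 1)) m"
    unfolding coeff_eq fps_X_power_nth by simp
qed

lemma linear_recurrence_weighted_sq_sum_le:
  fixes c s :: "nat \<Rightarrow> real" and R \<tau> :: real and n :: nat
  assumes "n \<ge> 1" and "R > 0" and "\<tau> > 0"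
    and Re_gt: "\<And>w. cmod w = R \<Longrightarrow> \<tau> < Re (1 + (\<Sum>i=1..n. complex_of_real (c i) * w ^ i))"
    and init: "\<And>j. j < n \<Longrightarrow> s j = (if j = n - 1 then 1 else 0)"
    and recurrence: "\<And>k. s (k + n) = - (\<Sum>i=1..n. c i * s (k + n - i))"
  shows "summable (\<lambda>m. (s m * R ^ m)\<^sup>2)" and "(\<Sum>m. (s m * R ^ m)\<^sup>2) \<le> (R ^ (n - 1) / \<tau>)\<^sup>2"
proof -
  define P where "P = 1 + (\<Sum>i=1..n. monom (complex_of_real (c i)) i)"
  define S where "S = Abs_fps (\<lambda>m. complex_of_real (s m))"
  have poly_P: "poly P w = 1 + (\<Sum>i=1..n. complex_of_real (c i) * w ^ i)" for w
    by (simp add: P_def poly_sum poly_monom)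
  have Re_P: "\<tau> \<le> Re (poly P w)" if "cmod w \<le> R" for w
  proof (rule Re_ge_on_cball_if_Re_ge_on_sphere[of "poly P" 0 R])
    show "poly P holomorphic_on ball 0 R"
      by (intro holomorphic_intros)
    show "continuous_on (cball 0 R) (poly P)"
      by (intro continuous_intros)
    show "\<tau> \<le> Re (poly P w)" if "w \<in> sphere 0 R" for w
      using that Re_gt[of w] by (simp add: poly_P)
  qed (use that in simp)
  have norm_P: "\<tau> \<le> cmod (poly P w)" if "cmod w \<le> R" for w
    using Re_P[OF that] complex_Re_le_cmod order_trans by blast
  have nonzero: "poly P w \<noteq> 0" if "cmod w \<le> R" for w
    using norm_P[OF that] \<open>\<tau> > 0\<close> by auto
  note S_fps = eval_fps_of_poly_mult_eq_X_power
      [OF linear_recurrence_fps[OF \<open>n \<ge> 1\<close> init recurrence, folded P_def S_def]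
        less_imp_le[OF \<open>R > 0\<close>] nonzero]
  have "summable (\<lambda>m. norm (fps_nth S m * complex_of_real R ^ m))"
    using S_fps(1) \<open>R > 0\<close> by (intro norm_summable_fps) simp
  then have abs_summable: "summable (\<lambda>m. cmod (complex_of_real (s m)) * R ^ m)"
    using \<open>R > 0\<close> by (simp add: S_def norm_mult norm_power)
  have bound: "cmod (\<Sum>m. complex_of_real (s m) * w ^ m) \<le> R ^ (n - 1) / \<tau>" if "cmod w = R" for w
  proof -
    have "(\<Sum>m. complex_of_real (s m) * w ^ m) = w ^ (n - 1) / poly P w"
      using S_fps(2)[of w] that by (simp add: eval_fps_def S_def)
    moreover have "R ^ (n - 1) / cmod (poly P w) \<le> R ^ (n - 1) / \<tau>"
      using that norm_P[of w] \<open>\<tau> > 0\<close> \<open>R > 0\<close> by (intro divide_left_mono mult_pos_pos) auto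
    ultimately show ?thesis
      using that by (simp add: norm_divide norm_power)
  qed
  have sq: "(cmod (complex_of_real (s m)) * R ^ m)\<^sup>2 = (s m * R ^ m)\<^sup>2" for m
    by (simp add: power_mult_distrib)
  show "summable (\<lambda>m. (s m * R ^ m)\<^sup>2)" and "(\<Sum>m. (s m * R ^ m)\<^sup>2) \<le> (R ^ (n - 1) / \<tau>)\<^sup>2"
    using suminf_sq_coeff_le_sup_on_circle[OF less_imp_le[OF \<open>R > 0\<close>] abs_summable bound]
    unfolding sq by simp_all
qed

section \<open>The companion matrix\<close>

lemma pow_mat_Suc_left:
  assumes "A \<in> carrier_mat n n"
  shows "A ^\<^sub>m Suc k = A * A ^\<^sub>m k"
proof (induction k)
  case (Suc k)
  have "A ^\<^sub>m Suc (Suc k) = (A * A ^\<^sub>m k) * A"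
    by (simp add: Suc[symmetric])
  also have "\<dots> = A * A ^\<^sub>m Suc k"
    using assms by (simp add: assoc_mult_mat[of _ n n _ n _ n])
  finally show ?case .
qed (use assms in simp)

lemma pow_mat_Suc_mult_vec:
  assumes "A \<in> carrier_mat n n" and "w \<in> carrier_vec n"
  shows "(A ^\<^sub>m Suc k) *\<^sub>v w = A *\<^sub>v ((A ^\<^sub>m k) *\<^sub>v w)"
  unfolding pow_mat_Suc_left[OF assms(1)] using assms by (simp add: assoc_mult_mat_vec[of _ n n _ n])

definition CC_orbit :: "real vec \<Rightarrow> nat \<Rightarrow> real vec" where
  "CC_orbit a k = (CC a ^\<^sub>m k) *\<^sub>v unit_vec (dim_vec a) (dim_vec a - 1)"

definition impulse_response :: "real vec \<Rightarrow> nat \<Rightarrow> real" where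
  "impulse_response a m = CC_orbit a m $ 0"

lemma dim_CC_orbit [simp]: "dim_vec (CC_orbit a k) = dim_vec a"
  by (simp add: CC_orbit_def CC_def Let_def)

context
  fixes a :: "real vec" and n :: nat
  assumes dim_a: "dim_vec a = n" and "n \<ge> 1"
begin

lemma CC_carrier: "CC a \<in> carrier_mat n n"
  by (simp add: CC_def Let_def dim_a)

lemma CC_orbit_Suc: "CC_orbit a (Suc k) = CC a *\<^sub>v CC_orbit a k"
  unfolding CC_orbit_def dim_a using CC_carrier by (intro pow_mat_Suc_mult_vec) auto

lemma CC_mult_vec_nth_shift:
  assumes "dim_vec w = n" and "i < n - 1"
  shows "(CC a *\<^sub>v w) $ i = w $ (i + 1)"
proof -
  have "(CC a *\<^sub>v w) $ i = (\<Sum>j = 0..<n. (if j = i + 1 then 1 else 0) * w $ j)"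
    using assms by (simp add: CC_def Let_def dim_a scalar_prod_def)
  also have "\<dots> = (\<Sum>j = 0..<n. (if j = i + 1 then w $ j else 0))"
    by (intro sum.cong) auto
  also have "\<dots> = w $ (i + 1)"
    using assms by (simp add: sum.delta')
  finally show ?thesis .
qed

lemma CC_mult_vec_nth_last:
  assumes "dim_vec w = n"
  shows "(CC a *\<^sub>v w) $ (n - 1) = - (\<Sum>i=1..n. a $ (i - 1) * w $ (n - i))"
proof -
  have "(CC a *\<^sub>v w) $ (n - 1) = - (\<Sum>j<n. a $ (n - 1 - j) * w $ j)"
    using assms \<open>n \<ge> 1\<close>
    by (simp add: CC_def Let_def dim_a scalar_prod_def sum_negf atLeast0LessThan)
  also have "(\<Sum>j<n. a $ (n - 1 - j) * w $ j) = (\<Sum>i=1..n. a $ (i - 1) * w $ (n - i))"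
    by (rule sum.reindex_bij_witness[where i = "\<lambda>i. n - i" and j = "\<lambda>j. n - j"]) auto
  finally show ?thesis .
qed

lemma CC_orbit_nth:
  assumes "i < n"
  shows "CC_orbit a k $ i = impulse_response a (k + i)"
  using assms
proof (induction i arbitrary: k)
  case (Suc i)
  have "CC_orbit a k $ Suc i = CC_orbit a (Suc k) $ i"
    using Suc.prems by (simp add: CC_orbit_Suc CC_mult_vec_nth_shift dim_a)
  also have "\<dots> = impulse_response a (k + Suc i)"
    using Suc by simp
  finally show ?case .
qed (simp add: impulse_response_def)

lemma impulse_response_init:
  assumes "j < n"
  shows "impulse_response a j = (if j = n - 1 then 1 else 0)"
  using CC_orbit_nth[OF assms, of 0] assms CC_carrier by (simp add: CC_orbit_def dim_a)

lemma impulse_response_recurrence: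
  "impulse_response a (k + n) = - (\<Sum>i=1..n. a $ (i - 1) * impulse_response a (k + n - i))"
proof -
  have "impulse_response a (k + n) = CC_orbit a (Suc k) $ (n - 1)"
    using CC_orbit_nth[of "n - 1" "Suc k"] \<open>n \<ge> 1\<close> by simp
  also have "\<dots> = (CC a *\<^sub>v CC_orbit a k) $ (n - 1)"
    by (simp only: CC_orbit_Suc)
  also have "\<dots> = - (\<Sum>i=1..n. a $ (i - 1) * CC_orbit a k $ (n - i))"
    by (rule CC_mult_vec_nth_last) (simp add: dim_a)
  also have "\<dots> = - (\<Sum>i=1..n. a $ (i - 1) * impulse_response a (k + n - i))"
    by (intro arg_cong[where f = uminus] sum.cong refl) (simp add: CC_orbit_nth)
  finally show ?thesis .
qed

end

section \<open>Weighted energy of the companion orbit\<close>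

lemma sum_window_le_suminf:
  fixes b :: "nat \<Rightarrow> real"
  assumes "summable b" and "\<And>m. 0 \<le> b m"
  shows "(\<Sum>i<n. b (k + i)) \<le> suminf b"
proof -
  have "(\<Sum>i<n. b (k + i)) = sum b ((+) k ` {..<n})"
    by (simp add: sum.reindex o_def)
  also have "\<dots> \<le> suminf b"
    using assms by (intro sum_le_suminf) auto
  finally show ?thesis .
qed

lemma suminf_sum_window_le:
  fixes b :: "nat \<Rightarrow> real"
  assumes "summable b" and "\<And>m. 0 \<le> b m"
  shows "summable (\<lambda>k. \<Sum>i<n. b (k + i))"
    and "(\<Sum>k. \<Sum>i<n. b (k + i)) \<le> real n * suminf b"
proof -
  have shifted: "summable (\<lambda>k. b (k + i))" for i
    using summable_ignore_initial_segment[OF assms(1)] .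
  then show "summable (\<lambda>k. \<Sum>i<n. b (k + i))"
    by (intro summable_sum)
  have "(\<Sum>k. \<Sum>i<n. b (k + i)) = (\<Sum>i<n. \<Sum>k. b (k + i))"
    using shifted by (intro suminf_sum)
  also have "\<dots> \<le> (\<Sum>i<n. suminf b)"
  proof (intro sum_mono)
    fix i
    show "(\<Sum>k. b (k + i)) \<le> suminf b"
      using suminf_split_initial_segment[OF assms(1), of i] assms(2) by (simp add: sum_nonneg)
  qed
  finally show "(\<Sum>k. \<Sum>i<n. b (k + i)) \<le> real n * suminf b"
    by simp
qed

lemma sqnorm_smult: "sqnorm (c \<cdot>\<^sub>v v) = c\<^sup>2 * sqnorm v"
  by (simp add: sqnorm_def power_mult_distrib sum_distrib_left)

lemma sqnorm_CC_orbit: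
  assumes "dim_vec a = n" and "n \<ge> 1"
  shows "sqnorm (CC_orbit a k) = (\<Sum>i<n. (impulse_response a (k + i))\<^sup>2)"
  using assms by (simp add: sqnorm_def CC_orbit_nth)

lemma impulse_response_weighted_sq_sum_le:
  fixes a :: "real vec" and R \<tau> :: real
  assumes "dim_vec a = n" and "n \<ge> 1" and "R > 0" and "\<tau> > 0"
    and "\<And>w. cmod w = R \<Longrightarrow> \<tau> < Re (1 + (\<Sum>i=1..n. complex_of_real (a $ (i - 1)) * w ^ i))"
  shows "summable (\<lambda>m. (impulse_response a m * R ^ m)\<^sup>2)"
    and "(\<Sum>m. (impulse_response a m * R ^ m)\<^sup>2) \<le> (R ^ (n - 1) / \<tau>)\<^sup>2"
proof -
  note hyps = assms(2-5) impulse_response_init[OF assms(1,2)] impulse_response_recurrence[OF assms(1,2)]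
  show "summable (\<lambda>m. (impulse_response a m * R ^ m)\<^sup>2)"
    using hyps by (rule linear_recurrence_weighted_sq_sum_le(1))
  show "(\<Sum>m. (impulse_response a m * R ^ m)\<^sup>2) \<le> (R ^ (n - 1) / \<tau>)\<^sup>2"
    using hyps by (rule linear_recurrence_weighted_sq_sum_le(2))
qed

lemma sq_mult_power_mono:
  fixes R x :: real
  assumes "1 \<le> R" and "j \<le> m"
  shows "(R ^ j * x)\<^sup>2 \<le> (x * R ^ m)\<^sup>2"
proof -
  have "R ^ j * \<bar>x\<bar> \<le> R ^ m * \<bar>x\<bar>"
    using power_increasing[OF assms(2,1)] by (rule mult_right_mono) simp
  then have "(R ^ j * \<bar>x\<bar>)\<^sup>2 \<le> (R ^ m * \<bar>x\<bar>)\<^sup>2"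
    using assms(1) by (intro power_mono) auto
  then show ?thesis
    by (simp add: power_mult_distrib mult.commute)
qed

text \<open>Every window of \<open>n\<close> consecutive terms of the impulse response \<open>s\<close> is dominated by
  the weighted energy \<open>\<Sum>m. (s m * R ^ m)\<^sup>2\<close>; since \<open>s m = 0\<close> for \<open>m < n - 1\<close>, the weights
  inside the window starting at \<open>k\<close> are at least \<open>R ^ (2 * k)\<close> and at least \<open>R ^ (2 * (n - 1))\<close>.\<close>
lemma CC_orbit_weighted_bounds:
  fixes a :: "real vec" and R \<tau> :: real
  assumes dim_a: "dim_vec a = n" and "n \<ge> 1" and "R \<ge> 1" and "\<tau> > 0"
    and Re_gt: "\<And>w. cmod w = R \<Longrightarrow> \<tau> < Re (1 + (\<Sum>i=1..n. complex_of_real (a $ (i - 1)) * w ^ i))"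
  shows "summable (\<lambda>k. sqnorm (R ^ k \<cdot>\<^sub>v CC_orbit a k))"
    and "(\<Sum>k. sqnorm (R ^ k \<cdot>\<^sub>v CC_orbit a k)) \<le> n * (R ^ (n - 1) / \<tau>)\<^sup>2"
    and "sqnorm (R ^ k \<cdot>\<^sub>v CC_orbit a k) \<le> (R ^ (n - 1) / \<tau>)\<^sup>2"
    and "sqnorm (CC_orbit a k) \<le> 1 / \<tau>\<^sup>2"
proof -
  define s where "s = impulse_response a"
  define b where "b m = (s m * R ^ m)\<^sup>2" for m
  have "R > 0" using \<open>R \<ge> 1\<close> by simp
  note energy = impulse_response_weighted_sq_sum_le[OF dim_a \<open>n \<ge> 1\<close> \<open>R > 0\<close> \<open>\<tau> > 0\<close> Re_gt,
      folded s_def, folded b_def[abs_def]]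
  have b_summable: "summable b" and b_le: "suminf b \<le> (R ^ (n - 1) / \<tau>)\<^sup>2"
    using energy by simp_all
  have b_nonneg: "0 \<le> b m" for m
    by (simp add: b_def)
  have window_le: "(\<Sum>i<n. b (k + i)) \<le> (R ^ (n - 1) / \<tau>)\<^sup>2" for k
    using sum_window_le_suminf[OF b_summable b_nonneg] b_le by (rule order_trans)
  have orbit_window: "sqnorm (c \<cdot>\<^sub>v CC_orbit a k) = (\<Sum>i<n. (c * s (k + i))\<^sup>2)" for c k
    using dim_a \<open>n \<ge> 1\<close>
    by (simp add: sqnorm_smult sqnorm_CC_orbit s_def sum_distrib_left power_mult_distrib)
  have scaled_le: "sqnorm (R ^ k \<cdot>\<^sub>v CC_orbit a k) \<le> (\<Sum>i<n. b (k + i))" for k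
    unfolding orbit_window b_def using \<open>R \<ge> 1\<close> by (intro sum_mono sq_mult_power_mono) simp_all
  note window_summable = suminf_sum_window_le(1)[OF b_summable b_nonneg, of n]
  have sqnorm_nonneg: "0 \<le> sqnorm v" for v
    by (simp add: sqnorm_def sum_nonneg)
  show "summable (\<lambda>k. sqnorm (R ^ k \<cdot>\<^sub>v CC_orbit a k))"
    by (rule summable_comparison_test'[OF window_summable]) (simp add: sqnorm_nonneg scaled_le)
  then have "(\<Sum>k. sqnorm (R ^ k \<cdot>\<^sub>v CC_orbit a k)) \<le> (\<Sum>k. \<Sum>i<n. b (k + i))"
    by (intro suminf_le scaled_le window_summable)
  also have "\<dots> \<le> n * (R ^ (n - 1) / \<tau>)\<^sup>2"
    using suminf_sum_window_le(2)[OF b_summable b_nonneg, of n] b_le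
    by (meson mult_left_mono of_nat_0_le_iff order_trans)
  finally show "(\<Sum>k. sqnorm (R ^ k \<cdot>\<^sub>v CC_orbit a k)) \<le> n * (R ^ (n - 1) / \<tau>)\<^sup>2" .
  show "sqnorm (R ^ k \<cdot>\<^sub>v CC_orbit a k) \<le> (R ^ (n - 1) / \<tau>)\<^sup>2"
    using scaled_le window_le by (rule order_trans)
  have "(R ^ (n - 1) * s (k + i))\<^sup>2 \<le> b (k + i)" for i
  proof (cases "k + i < n - 1")
    case True
    then show ?thesis
      using impulse_response_init[OF dim_a \<open>n \<ge> 1\<close>, of "k + i"] b_nonneg by (simp add: s_def)
  qed (use \<open>R \<ge> 1\<close> in \<open>simp add: b_def sq_mult_power_mono\<close>)
  then have "sqnorm (R ^ (n - 1) \<cdot>\<^sub>v CC_orbit a k) \<le> (\<Sum>i<n. b (k + i))"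
    unfolding orbit_window by (intro sum_mono)
  then have "(R ^ (n - 1))\<^sup>2 * sqnorm (CC_orbit a k) \<le> (R ^ (n - 1))\<^sup>2 * (1 / \<tau>\<^sup>2)"
    using window_le[of k] by (simp add: sqnorm_smult power_divide)
  then show "sqnorm (CC_orbit a k) \<le> 1 / \<tau>\<^sup>2"
    by (rule mult_left_le_imp_le) (use \<open>R > 0\<close> in simp)
qed

lemma B_alpha_Re_gt:
  assumes a: "a \<in> B_alpha \<tau>0 \<tau>1 \<tau>2 n \<alpha>" and "0 < \<alpha>" and w: "cmod w = inverse \<alpha>"
  shows "\<tau>1 < Re (1 + (\<Sum>i=1..n. complex_of_real (a $ (i - 1)) * w ^ i))"
proof -
  have dim_a: "dim_vec a = n"
    using a by (simp add: B_alpha_def)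
  define z where "z = inverse w"
  have "w \<noteq> 0"
    using w \<open>0 < \<alpha>\<close> by auto
  have "cmod z = \<alpha>"
    using w \<open>0 < \<alpha>\<close> by (simp add: z_def norm_inverse)
  then have in_C: "char_poly_a a z / z ^ n \<in> regionC \<tau>0 \<tau>1 \<tau>2"
    using a by (simp add: B_alpha_def)
  have z_pow: "z ^ (n - k) / z ^ n = w ^ k" if "k \<le> n" for k
  proof -
    have "z ^ (n - k) / z ^ n = (z * w) ^ (n - k) * w ^ k"
      using that by (simp add: z_def divide_inverse power_inverse power_mult_distrib
          flip: power_add)
    then show ?thesis
      using \<open>w \<noteq> 0\<close> by (simp add: z_def)
  qed
  have "char_poly_a a z / z ^ n
      = z ^ n / z ^ n + (\<Sum>i=1..n. complex_of_real (a $ (i - 1)) * (z ^ (n - i) / z ^ n))"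
    by (simp add: char_poly_a_def dim_a add_divide_distrib sum_divide_distrib mult.assoc)
  also have "\<dots> = 1 + (\<Sum>i=1..n. complex_of_real (a $ (i - 1)) * w ^ i)"
    using \<open>w \<noteq> 0\<close> z_pow by (intro arg_cong2[where f = "(+)"] sum.cong) (auto simp: z_def)
  finally have "char_poly_a a z / z ^ n = 1 + (\<Sum>i=1..n. complex_of_real (a $ (i - 1)) * w ^ i)" .
  then show ?thesis
    using in_C by (simp add: regionC_def)
qed

lemma le_two_pi_times:
  fixes x c :: real
  assumes "0 \<le> x" and "1 \<le> c"
  shows "x \<le> 2 * pi * c * x"
proof -
  have "1 \<le> 2 * pi * c"
    using assms(2) pi_gt3 mult_mono[of 1 "2 * pi" 1 c] by simp
  then show ?thesis
    using mult_right_mono[of 1 "2 * pi * c" x] assms(1) by simp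
qed

lemma inverse_power_sq_le_powi:
  fixes \<alpha> :: real
  assumes "0 < \<alpha>" and "\<alpha> \<le> 1"
  shows "(inverse \<alpha> ^ (n - 1))\<^sup>2 \<le> \<alpha> powi (- 2 * int n)"
proof -
  have "(inverse \<alpha> ^ (n - 1))\<^sup>2 = inverse \<alpha> ^ (2 * (n - 1))"
    by (rule power_even_eq[symmetric])
  also have "\<dots> \<le> inverse \<alpha> ^ (2 * n)"
    using assms by (intro power_increasing one_le_inverse) auto
  also have "\<dots> = \<alpha> powi (- 2 * int n)"
    by (simp add: power_int_minus power_inverse power_int_inverse flip: power_int_of_nat)
  finally show ?thesis .
qed

lemma sqnorm_le_powi_if_scaled_le:
  fixes \<alpha> C :: real
  assumes "0 < \<alpha>" and scaled: "sqnorm (inverse \<alpha> ^ k \<cdot>\<^sub>v v) \<le> \<alpha> powi (- 2 * int n) * C"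
  shows "sqnorm v \<le> \<alpha> powi (2 * int k - 2 * int n) * C"
proof -
  have "\<alpha> ^ (2 * k) * (inverse \<alpha> ^ k)\<^sup>2 = (\<alpha> ^ k * inverse \<alpha> ^ k)\<^sup>2"
    by (simp only: power_even_eq power_mult_distrib)
  also have "\<dots> = 1"
    using assms(1) by (simp add: power_inverse)
  finally have "\<alpha> ^ (2 * k) * (inverse \<alpha> ^ k)\<^sup>2 = 1" .
  then have "sqnorm v = \<alpha> ^ (2 * k) * sqnorm (inverse \<alpha> ^ k \<cdot>\<^sub>v v)"
    by (simp add: sqnorm_smult mult.assoc[symmetric])
  also have "\<dots> \<le> \<alpha> ^ (2 * k) * (\<alpha> powi (- 2 * int n) * C)"
    using scaled by (intro mult_left_mono) simp_all
  also have "\<dots> = \<alpha> powi (2 * int k - 2 * int n) * C"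
    using assms(1) power_int_of_nat[of \<alpha> "2 * k"]
    by (simp add: power_int_diff power_int_minus divide_inverse)
  finally show ?thesis .
qed

theorem lemma4p4:
  fixes \<tau>0 \<tau>1 \<tau>2 \<alpha> :: real and n :: nat and a :: "real vec"
  assumes "\<tau>0 > 0" and "\<tau>1 > 0" and "\<tau>2 > 0"
    and "0 < \<alpha>" and "\<alpha> \<le> 1"
    and "n \<ge> 1"
    and "a \<in> B_alpha \<tau>0 \<tau>1 \<tau>2 n \<alpha>"
  shows "summable (\<lambda>k. sqnorm (inverse (\<alpha> ^ k) \<cdot>\<^sub>v ((CC a ^\<^sub>m k) *\<^sub>v unit_vec n (n - 1))))
       \<and> (\<Sum>k. sqnorm (inverse (\<alpha> ^ k) \<cdot>\<^sub>v ((CC a ^\<^sub>m k) *\<^sub>v unit_vec n (n - 1))))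
           \<le> 2 * pi * n * \<alpha> powi (- 2 * int n) / \<tau>1\<^sup>2
       \<and> (\<forall>k. sqnorm ((CC a ^\<^sub>m k) *\<^sub>v unit_vec n (n - 1))
           \<le> min (2 * pi * n / \<tau>1\<^sup>2) (2 * pi * n * \<alpha> powi (2 * int k - 2 * int n) / \<tau>1\<^sup>2))"
proof -
  have dim_a: "dim_vec a = n"
    using assms(7) by (simp add: B_alpha_def)
  have "1 \<le> inverse \<alpha>"
    using assms(4,5) by (rule one_le_inverse)
  note bounds =
    CC_orbit_weighted_bounds[OF dim_a \<open>n \<ge> 1\<close> this \<open>\<tau>1 > 0\<close> B_alpha_Re_gt[OF assms(7,4)]]
  have energy_le: "(inverse \<alpha> ^ (n - 1) / \<tau>1)\<^sup>2 \<le> \<alpha> powi (- 2 * int n) * (1 / \<tau>1\<^sup>2)"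
    using inverse_power_sq_le_powi[OF assms(4,5), of n]
    by (simp add: power_divide divide_right_mono)
  have "(\<Sum>k. sqnorm (inverse \<alpha> ^ k \<cdot>\<^sub>v CC_orbit a k))
      \<le> n * (\<alpha> powi (- 2 * int n) * (1 / \<tau>1\<^sup>2))"
    using bounds(2) energy_le by (meson mult_left_mono of_nat_0_le_iff order_trans)
  also have "\<dots> \<le> 2 * pi * n * \<alpha> powi (- 2 * int n) / \<tau>1\<^sup>2"
    using le_two_pi_times[of "n * (\<alpha> powi (- 2 * int n) * (1 / \<tau>1\<^sup>2))" 1] assms(4)
    by (simp add: mult_ac)
  finally have sum_le: "(\<Sum>k. sqnorm (inverse \<alpha> ^ k \<cdot>\<^sub>v CC_orbit a k))
      \<le> 2 * pi * n * \<alpha> powi (- 2 * int n) / \<tau>1\<^sup>2" .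
  have "sqnorm (CC_orbit a k) \<le> 2 * pi * n / \<tau>1\<^sup>2" for k
    using bounds(4)[of k] le_two_pi_times[of "1 / \<tau>1\<^sup>2" n] \<open>n \<ge> 1\<close> by simp
  moreover have
    "sqnorm (CC_orbit a k) \<le> 2 * pi * n * \<alpha> powi (2 * int k - 2 * int n) / \<tau>1\<^sup>2" for k
  proof -
    have "sqnorm (CC_orbit a k) \<le> \<alpha> powi (2 * int k - 2 * int n) * (1 / \<tau>1\<^sup>2)"
      by (rule sqnorm_le_powi_if_scaled_le[OF assms(4) order_trans[OF bounds(3) energy_le]])
    also have "\<dots> \<le> 2 * pi * n * (\<alpha> powi (2 * int k - 2 * int n) * (1 / \<tau>1\<^sup>2))"
      using assms(4) \<open>n \<ge> 1\<close> by (intro le_two_pi_times) simp_all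
    finally show ?thesis by simp
  qed
  ultimately show ?thesis
    using bounds(1) sum_le by (simp add: CC_orbit_def dim_a power_inverse)
qed

end
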